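(* The function $F$ is Lebesgue integrable on $[0,1]$ and $$\int_0^1F(x)\,dx=z_1+\sum_{n=2}^{\infty}\Big(z_n\prod_{k=1}^{n-1}\sigma_k\Big),$$ where $z_n=\sum_{i=0}^{m_n}\beta_{i,n}q_{i,n}$ and $\sigma_n=\sum_{i=0}^{m_n}p_{i,n}q_{i,n}$.
   Context: Let $(m_n)_{n\ge1}$ be finite nonnegative integers and $\tilde Q=\|q_{i,n}\|$ ($i\in\{0,\dots,m_n\}$) with $q_{i,n}>0$, $\sum_{i}q_{i,n}=1$ for all $n$, and $\prod_n q_{i_n,n}=0$ for every digit sequence $(i_n)$. Put $a_{0,n}=0$, $a_{i,n}=\sum_{l<i}q_{l,n}$; $\Delta^{\tilde Q}_{j_1j_2\dots}=a_{j_1,1}+\sum_{n\ge2}a_{j_n,n}\prod_{l<n}q_{j_l,l}$. The nega-$\tilde Q$-representation $x=\Delta^{-\tilde Q}_{i_1i_2\dots}$ means $x=\Delta^{\tilde Q}_{i_1[m_2-i_2]i_3[m_4-i_4]\dots}$; every $x\in[0,1]$ has one. Let $P=\|p_{i,n}\|$ have the same shape with $p_{i,n}\in(-1,1)$, $\sum_ip_{i,n}=1$, $\prod_n|p_{i_n,n}|=0$ for every digit sequence, $0<\sum_{i<c}p_{i,n}<1$ for $c\in\{1,\dots,m_n\}$. Put $\beta_{0,n}=0$, $\beta_{c,n}=\sum_{i<c}p_{i,n}$; for odd $n$: $\tilde p_{i,n}=p_{i,n}$, $\tilde\beta_{i,n}=\beta_{i,n}$; for even $n$: $\tilde p_{i,n}=p_{m_n-i,n}$,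 $\tilde\beta_{i,n}=\beta_{m_n-i,n}$. $F(x)=\beta_{i_1,1}+\sum_{k\ge2}\tilde\beta_{i_k,k}\prod_{j<k}\tilde p_{i_j,j}$ for $x=\Delta^{-\tilde Q}_{i_1i_2\dots}$ (independent of the representation). *)

theory Defs
  imports "HOL-Analysis.Analysis"
begin

text \<open>Matrices are indexed as  q i n  (digit i, position n); positions start at n = 1,
  the value at position 0 is irrelevant.\<close>

definition digit_seq :: "(nat \<Rightarrow> nat) \<Rightarrow> (nat \<Rightarrow> nat) \<Rightarrow> bool" where
  "digit_seq m d \<longleftrightarrow> (\<forall>n\<ge>1. d n \<le> m n)"

definition Q_matrix :: "(nat \<Rightarrow> nat) \<Rightarrow> (nat \<Rightarrow> nat \<Rightarrow> real) \<Rightarrow> bool" where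
  "Q_matrix m q \<longleftrightarrow>
     (\<forall>n\<ge>1. \<forall>i\<le>m n. q i n > 0) \<and>
     (\<forall>n\<ge>1. (\<Sum>i\<le>m n. q i n) = 1) \<and>
     (\<forall>d. digit_seq m d \<longrightarrow> (\<lambda>N. \<Prod>n\<in>{1..N}. q (d n) n) \<longlonglongrightarrow> 0)"

definition P_matrix :: "(nat \<Rightarrow> nat) \<Rightarrow> (nat \<Rightarrow> nat \<Rightarrow> real) \<Rightarrow> bool" where
  "P_matrix m p \<longleftrightarrow>
     (\<forall>n\<ge>1. \<forall>i\<le>m n. -1 < p i n \<and> p i n < 1) \<and>
     (\<forall>n\<ge>1. (\<Sum>i\<le>m n. p i n) = 1) \<and>
     (\<forall>d. digit_seq m d \<longrightarrow> (\<lambda>N. \<Prod>n\<in>{1..N}. \<bar>p (d n) n\<bar>) \<longlonglongrightarrow> 0) \<and>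
     (\<forall>n\<ge>1. \<forall>c\<in>{1..m n}. 0 < (\<Sum>i<c. p i n) \<and> (\<Sum>i<c. p i n) < 1)"

text \<open>a_{i,n} (and likewise beta_{c,n}) = sum of the entries with index < i\<close>
definition acc :: "(nat \<Rightarrow> nat \<Rightarrow> real) \<Rightarrow> nat \<Rightarrow> nat \<Rightarrow> real" where
  "acc q i n = (\<Sum>l<i. q l n)"

definition DeltaQ :: "(nat \<Rightarrow> nat \<Rightarrow> real) \<Rightarrow> (nat \<Rightarrow> nat) \<Rightarrow> real" where
  "DeltaQ q j = (\<Sum>k. acc q (j (k+1)) (k+1) * (\<Prod>l\<in>{1..k}. q (j l) l))"

definition nega_digits :: "(nat \<Rightarrow> nat) \<Rightarrow> (nat \<Rightarrow> nat) \<Rightarrow> nat \<Rightarrow> nat" where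
  "nega_digits m i n = (if odd n then i n else m n - i n)"

definition NegaDeltaQ :: "(nat \<Rightarrow> nat) \<Rightarrow> (nat \<Rightarrow> nat \<Rightarrow> real) \<Rightarrow> (nat \<Rightarrow> nat) \<Rightarrow> real" where
  "NegaDeltaQ m q i = DeltaQ q (nega_digits m i)"

definition tilde :: "(nat \<Rightarrow> nat) \<Rightarrow> (nat \<Rightarrow> nat \<Rightarrow> real) \<Rightarrow> nat \<Rightarrow> nat \<Rightarrow> real" where
  "tilde m f i n = (if odd n then f i n else f (m n - i) n)"

definition Fdigits :: "(nat \<Rightarrow> nat) \<Rightarrow> (nat \<Rightarrow> nat \<Rightarrow> real) \<Rightarrow> (nat \<Rightarrow> nat) \<Rightarrow> real" where
  "Fdigits m p i = (\<Sum>k. tilde m (acc p) (i (k+1)) (k+1) * (\<Prod>j\<in>{1..k}. tilde m p (i j) j))"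

text \<open>F(x), using some nega-Q representation of x (the value is independent of the choice)\<close>
definition Ffun :: "(nat \<Rightarrow> nat) \<Rightarrow> (nat \<Rightarrow> nat \<Rightarrow> real) \<Rightarrow> (nat \<Rightarrow> nat \<Rightarrow> real) \<Rightarrow> real \<Rightarrow> real" where
  "Ffun m q p x = Fdigits m p (SOME i. digit_seq m i \<and> x = NegaDeltaQ m q i)"

end

theory Submission
  imports Defs
begin

text \<open>Let \<open>j\<close> be the \<open>Q\<close>-digits of \<open>x\<close>, i.e. the digits obtained from a nega-\<open>Q\<close>-representation
  by reflecting the even positions. Then \<open>F(x)\<close> is the \<open>Q\<close>-series of \<open>j\<close> with the entries of \<open>P\<close>
  in place of those of \<open>Q\<close>, so its \<open>N\<close>-th partial sum depends only on the first \<open>N\<close> digits of \<open>x\<close>.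
  The points of \<open>[0,1]\<close> with prescribed first \<open>N\<close> digits \<open>c\<close> form, up to two endpoints, an interval
  of length \<open>\<Prod>\<^sub>l q(c\<^sub>l,l)\<close>; hence the integral of the \<open>N\<close>-th partial sum is a finite sum over
  digit prefixes, which factorises into \<open>\<Sum>k<N. z(k+1) \<sigma>(1) \<cdots> \<sigma>(k)\<close>. The partial sums lie in
  \<open>[0,1]\<close> and converge pointwise to \<open>F\<close>, so dominated convergence gives the theorem.\<close>

definition partial_Delta :: "(nat \<Rightarrow> nat \<Rightarrow> real) \<Rightarrow> nat \<Rightarrow> (nat \<Rightarrow> nat) \<Rightarrow> real" where
  "partial_Delta f N j = (\<Sum>k<N. acc f (j (k+1)) (k+1) * (\<Prod>l\<in>{1..k}. f (j l) l))"

definition digit_prod :: "(nat \<Rightarrow> nat \<Rightarrow> real) \<Rightarrow> nat \<Rightarrow> (nat \<Rightarrow> nat) \<Rightarrow> real" where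
  "digit_prod f N j = (\<Prod>l\<in>{1..N}. f (j l) l)"

lemma partial_Delta_0 [simp]: "partial_Delta f 0 j = 0"
  by (simp add: partial_Delta_def)

lemma digit_prod_0 [simp]: "digit_prod f 0 j = 1"
  by (simp add: digit_prod_def)

lemma partial_Delta_Suc:
  "partial_Delta f (Suc N) j = partial_Delta f N j + acc f (j (Suc N)) (Suc N) * digit_prod f N j"
  by (simp add: partial_Delta_def digit_prod_def)

lemma digit_prod_Suc: "digit_prod f (Suc N) j = digit_prod f N j * f (j (Suc N)) (Suc N)"
  by (simp add: digit_prod_def prod.nat_ivl_Suc' mult.commute)

lemma acc_0 [simp]: "acc f 0 n = 0"
  by (simp add: acc_def)

lemma acc_Suc: "acc f (Suc i) n = acc f i n + f i n"
  by (simp add: acc_def)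

lemma partial_Delta_cong:
  "(\<And>l. l \<in> {1..N} \<Longrightarrow> j l = j' l) \<Longrightarrow> partial_Delta f N j = partial_Delta f N j'"
  by (induct N) (auto simp: partial_Delta_Suc digit_prod_def)

lemma digit_prod_cong:
  "(\<And>l. l \<in> {1..N} \<Longrightarrow> j l = j' l) \<Longrightarrow> digit_prod f N j = digit_prod f N j'"
  unfolding digit_prod_def by (rule prod.cong) auto

definition acc_in_unit :: "(nat \<Rightarrow> nat) \<Rightarrow> (nat \<Rightarrow> nat \<Rightarrow> real) \<Rightarrow> bool" where
  "acc_in_unit m f \<longleftrightarrow> (\<forall>n\<ge>1. \<forall>i\<le>Suc (m n). 0 \<le> acc f i n \<and> acc f i n \<le> 1)"

text \<open>Appending the digits \<open>N+1, \<dots>, M\<close> maps the unit interval into itself, since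
  \<open>acc f i n + f i n * y\<close> is a convex combination of \<open>acc f i n\<close> and \<open>acc f (i+1) n\<close>.\<close>

lemma partial_Delta_tail:
  assumes f: "acc_in_unit m f" and "N \<le> M" and j: "\<forall>l\<in>{Suc N..M}. j l \<le> m l"
    and "0 \<le> y" "y \<le> 1"
  shows "\<exists>w. 0 \<le> w \<and> w \<le> 1 \<and>
    partial_Delta f M j + digit_prod f M j * y = partial_Delta f N j + digit_prod f N j * w"
  using \<open>N \<le> M\<close> j \<open>0 \<le> y\<close> \<open>y \<le> 1\<close>
proof (induction M arbitrary: y rule: dec_induct)
  case base
  then show ?case by auto
next
  case (step M)
  define i where "i = j (Suc M)"
  have "i \<le> m (Suc M)"
    using step.prems(1) step.hyps(1) unfolding i_def by auto
  then have lo: "0 \<le> acc f i (Suc M) \<and> acc f i (Suc M) \<le> 1"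
    and hi: "0 \<le> acc f (Suc i) (Suc M) \<and> acc f (Suc i) (Suc M) \<le> 1"
    using f unfolding acc_in_unit_def by auto
  define y' where "y' = acc f i (Suc M) + f i (Suc M) * y"
  have y': "y' = (1 - y) * acc f i (Suc M) + y * acc f (Suc i) (Suc M)"
    unfolding y'_def acc_Suc by (simp add: algebra_simps)
  have "0 \<le> y'"
    unfolding y' using lo hi step.prems by simp
  moreover have "y' \<le> 1"
    using convex_bound_le[of "acc f i (Suc M)" 1 "acc f (Suc i) (Suc M)" "1 - y" y]
    unfolding y' using lo hi step.prems by simp
  ultimately obtain w where "0 \<le> w \<and> w \<le> 1 \<and>
      partial_Delta f M j + digit_prod f M j * y' = partial_Delta f N j + digit_prod f N j * w"
    using step.IH step.prems(1) by force
  moreover have "partial_Delta f (Suc M) j + digit_prod f (Suc M) j * y =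
      partial_Delta f M j + digit_prod f M j * y'"
    unfolding partial_Delta_Suc digit_prod_Suc y'_def i_def by (simp add: algebra_simps)
  ultimately show ?case by auto
qed

lemma partial_Delta_in_unit:
  assumes "acc_in_unit m f" and "\<forall>l\<in>{1..N}. j l \<le> m l"
  shows "0 \<le> partial_Delta f N j \<and> partial_Delta f N j \<le> 1"
  using partial_Delta_tail[OF assms(1) le0, of N j 0] assms(2) by auto

lemma partial_Delta_LIMSEQ:
  assumes f: "acc_in_unit m f" and j: "digit_seq m j" and prod0: "(\<lambda>N. digit_prod f N j) \<longlonglongrightarrow> 0"
  shows "(\<lambda>N. partial_Delta f N j) \<longlonglongrightarrow> (\<Sum>k. acc f (j (k+1)) (k+1) * (\<Prod>l\<in>{1..k}. f (j l) l))"
proof -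
  have tail_bound: "\<bar>partial_Delta f M j - partial_Delta f N j\<bar> \<le> \<bar>digit_prod f N j\<bar>"
    if NM: "N \<le> M" for N M
  proof -
    obtain w where "0 \<le> w" "w \<le> 1" "partial_Delta f M j = partial_Delta f N j + digit_prod f N j * w"
      using partial_Delta_tail[OF f NM, of j 0] j unfolding digit_seq_def by auto
    then show ?thesis
      by (simp add: abs_mult mult_left_le)
  qed
  have "Cauchy (\<lambda>N. partial_Delta f N j)"
  proof (rule CauchyI)
    fix e :: real
    assume "0 < e"
    then obtain M where M: "\<And>N. N \<ge> M \<Longrightarrow> \<bar>digit_prod f N j\<bar> < e/2"
      using prod0 unfolding LIMSEQ_iff by (metis half_gt_zero real_norm_def diff_zero)
    have "\<bar>partial_Delta f a j - partial_Delta f b j\<bar> < e" if "a \<ge> M" "b \<ge> M" for a b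
      using tail_bound[OF that(1)] tail_bound[OF that(2)] M[of M] by linarith
    then show "\<exists>M. \<forall>a\<ge>M. \<forall>b\<ge>M. norm (partial_Delta f a j - partial_Delta f b j) < e"
      by auto
  qed
  then have "summable (\<lambda>k. acc f (j (k+1)) (k+1) * (\<Prod>l\<in>{1..k}. f (j l) l))"
    unfolding summable_iff_convergent partial_Delta_def Cauchy_convergent_iff .
  then show ?thesis
    unfolding partial_Delta_def by (rule summable_LIMSEQ)
qed

lemma P_matrix_acc_in_unit:
  assumes "P_matrix m p"
  shows "acc_in_unit m p"
  unfolding acc_in_unit_def
proof (intro allI impI)
  fix n i
  assume n: "n \<ge> 1" and i: "i \<le> Suc (m n)"
  consider "i = 0" | "i = Suc (m n)" | "i \<in> {1..m n}"
    using i by fastforce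
  then show "0 \<le> acc p i n \<and> acc p i n \<le> 1"
    by cases (use assms n in \<open>auto simp: P_matrix_def acc_def lessThan_Suc_atMost less_imp_le\<close>)
qed

lemma P_matrix_digit_prod_LIMSEQ:
  assumes "P_matrix m p" and "digit_seq m j"
  shows "(\<lambda>N. digit_prod p N j) \<longlonglongrightarrow> 0"
proof -
  have "(\<lambda>N. \<bar>digit_prod p N j\<bar>) \<longlonglongrightarrow> 0"
    using assms unfolding P_matrix_def digit_prod_def by (simp add: abs_prod)
  then show ?thesis
    by (simp add: tendsto_rabs_zero_iff)
qed

subsection \<open>Cylinder intervals of a \<open>Q\<close>-matrix\<close>

lemma Q_matrix_acc_mono:
  assumes "Q_matrix m q" "n \<ge> 1" "a \<le> b" "b \<le> Suc (m n)"
  shows "acc q a n \<le> acc q b n"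
  unfolding acc_def
  by (rule sum_mono2) (use assms in \<open>auto simp: Q_matrix_def intro: less_imp_le\<close>)

lemma Q_matrix_acc_last:
  assumes "Q_matrix m q" "n \<ge> 1"
  shows "acc q (Suc (m n)) n = 1"
  using assms unfolding Q_matrix_def acc_def by (simp add: lessThan_Suc_atMost)

lemma Q_matrix_acc_in_unit:
  assumes "Q_matrix m q"
  shows "acc_in_unit m q"
  unfolding acc_in_unit_def
  using Q_matrix_acc_mono[OF assms, of _ 0] Q_matrix_acc_mono[OF assms, of _ _ "Suc (m _)"]
    Q_matrix_acc_last[OF assms] by fastforce

lemma Q_matrix_digit_prod_LIMSEQ:
  assumes "Q_matrix m q" and "digit_seq m j"
  shows "(\<lambda>N. digit_prod q N j) \<longlonglongrightarrow> 0"
  using assms unfolding Q_matrix_def digit_prod_def by blast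

lemma Q_matrix_digit_prod_nonneg:
  assumes "Q_matrix m q" and "\<forall>l\<in>{1..N}. j l \<le> m l"
  shows "0 \<le> digit_prod q N j"
  using assms unfolding Q_matrix_def digit_prod_def by (intro prod_nonneg) (auto intro: less_imp_le)

lemma cylinder_interval_mono:
  assumes Q: "Q_matrix m q" and "N \<le> M" and j: "\<forall>l\<in>{1..M}. j l \<le> m l"
  shows "partial_Delta q N j \<le> partial_Delta q M j \<and>
    partial_Delta q M j + digit_prod q M j \<le> partial_Delta q N j + digit_prod q N j"
proof -
  have nonneg: "0 \<le> digit_prod q N j"
    using Q_matrix_digit_prod_nonneg[OF Q] j \<open>N \<le> M\<close> by auto
  have tail: "\<forall>l\<in>{Suc N..M}. j l \<le> m l"
    using j by auto
  obtain w where "0 \<le> w" "partial_Delta q M j = partial_Delta q N j + digit_prod q N j * w"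
    using partial_Delta_tail[OF Q_matrix_acc_in_unit[OF Q] \<open>N \<le> M\<close> tail, of 0] by auto
  moreover obtain v where "v \<le> 1"
    "partial_Delta q M j + digit_prod q M j = partial_Delta q N j + digit_prod q N j * v"
    using partial_Delta_tail[OF Q_matrix_acc_in_unit[OF Q] \<open>N \<le> M\<close> tail, of 1] by auto
  ultimately show ?thesis
    using nonneg by (simp add: mult_left_le)
qed

lemma cylinder_interval_before:
  assumes Q: "Q_matrix m q" and a: "\<forall>l\<in>{1..N}. a l \<le> m l" and b: "\<forall>l\<in>{1..N}. b l \<le> m l"
    and "Suc k \<le> N" and agree: "\<forall>l\<in>{1..k}. a l = b l" and less: "a (Suc k) < b (Suc k)"
  shows "partial_Delta q N a + digit_prod q N a \<le> partial_Delta q N b"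
proof -
  have nonneg: "0 \<le> digit_prod q k a"
    using Q_matrix_digit_prod_nonneg[OF Q] a \<open>Suc k \<le> N\<close> by auto
  have acc_le: "acc q (Suc (a (Suc k))) (Suc k) \<le> acc q (b (Suc k)) (Suc k)"
  proof (rule Q_matrix_acc_mono[OF Q])
    show "b (Suc k) \<le> Suc (m (Suc k))"
      using b \<open>Suc k \<le> N\<close> by (simp add: le_SucI)
  qed (use less in auto)
  have same_prefix: "partial_Delta q k a = partial_Delta q k b" "digit_prod q k a = digit_prod q k b"
    using partial_Delta_cong[of k a b q] digit_prod_cong[of k a b q] agree by auto
  have "partial_Delta q (Suc k) a + digit_prod q (Suc k) a =
      partial_Delta q k a + digit_prod q k a * acc q (Suc (a (Suc k))) (Suc k)"
    by (simp add: partial_Delta_Suc digit_prod_Suc acc_Suc algebra_simps)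
  also have "\<dots> \<le> partial_Delta q k a + digit_prod q k a * acc q (b (Suc k)) (Suc k)"
    using mult_left_mono[OF acc_le nonneg] by simp
  also have "\<dots> = partial_Delta q (Suc k) b"
    by (simp add: partial_Delta_Suc same_prefix mult.commute)
  finally have "partial_Delta q (Suc k) a + digit_prod q (Suc k) a \<le> partial_Delta q (Suc k) b" .
  then show ?thesis
    using cylinder_interval_mono[OF Q \<open>Suc k \<le> N\<close> a] cylinder_interval_mono[OF Q \<open>Suc k \<le> N\<close> b]
    by linarith
qed

lemma cylinder_intervals_disjoint:
  assumes Q: "Q_matrix m q" and j: "\<forall>l\<in>{1..N}. j l \<le> m l" and j': "\<forall>l\<in>{1..N}. j' l \<le> m l"
    and differ: "\<exists>l\<in>{1..N}. j l \<noteq> j' l"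
  shows "partial_Delta q N j + digit_prod q N j \<le> partial_Delta q N j' \<or>
    partial_Delta q N j' + digit_prod q N j' \<le> partial_Delta q N j"
proof -
  define l where "l = (LEAST l. l \<in> {1..N} \<and> j l \<noteq> j' l)"
  have l: "l \<in> {1..N}" "j l \<noteq> j' l"
    using LeastI_ex[OF differ[unfolded Bex_def]] unfolding l_def by auto
  then obtain k where k: "l = Suc k" "Suc k \<le> N"
    by (cases l) auto
  have "\<not> (i \<in> {1..N} \<and> j i \<noteq> j' i)" if "i < l" for i
    using not_less_Least[OF that[unfolded l_def]] unfolding l_def .
  then have "\<forall>i\<in>{1..k}. j i = j' i"
    using k by auto
  moreover have "j (Suc k) < j' (Suc k) \<or> j' (Suc k) < j (Suc k)"
    using l(2) unfolding k(1) by (rule nat_neq_iff[THEN iffD1])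
  ultimately show ?thesis
    using cylinder_interval_before[OF Q j j' k(2)] cylinder_interval_before[OF Q j' j k(2)] by force
qed

lemma DeltaQ_LIMSEQ:
  assumes "Q_matrix m q" and "digit_seq m j"
  shows "(\<lambda>N. partial_Delta q N j) \<longlonglongrightarrow> DeltaQ q j"
  unfolding DeltaQ_def
  by (rule partial_Delta_LIMSEQ[OF Q_matrix_acc_in_unit[OF assms(1)] assms(2)
        Q_matrix_digit_prod_LIMSEQ[OF assms]])

lemma DeltaQ_in_cylinder_interval:
  assumes Q: "Q_matrix m q" and j: "digit_seq m j"
  shows "partial_Delta q N j \<le> DeltaQ q j \<and> DeltaQ q j \<le> partial_Delta q N j + digit_prod q N j"
proof -
  have "partial_Delta q N j \<le> partial_Delta q M j \<and>
      partial_Delta q M j \<le> partial_Delta q N j + digit_prod q N j" if "N \<le> M" for M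
  proof -
    have "\<forall>l\<in>{1..M}. j l \<le> m l"
      using j unfolding digit_seq_def by auto
    then show ?thesis
      using cylinder_interval_mono[OF Q that] Q_matrix_digit_prod_nonneg[OF Q] by fastforce
  qed
  then show ?thesis
    using LIMSEQ_le_const[OF DeltaQ_LIMSEQ[OF Q j]] LIMSEQ_le_const2[OF DeltaQ_LIMSEQ[OF Q j]] by blast
qed

subsection \<open>Existence of \<open>Q\<close>-representations\<close>

definition greedy_digit ::
    "(nat \<Rightarrow> nat) \<Rightarrow> (nat \<Rightarrow> nat \<Rightarrow> real) \<Rightarrow> real \<Rightarrow> real \<Rightarrow> real \<Rightarrow> nat \<Rightarrow> nat" where
  "greedy_digit m q x a P n = (GREATEST i. i \<le> m n \<and> a + P * acc q i n \<le> x)"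

lemma greedy_digit_bounds:
  assumes Q: "Q_matrix m q" and "n \<ge> 1" and "a \<le> x" and "x \<le> a + P"
  defines "g \<equiv> greedy_digit m q x a P n"
  shows "g \<le> m n \<and> a + P * acc q g n \<le> x \<and> x \<le> a + P * acc q (Suc g) n"
proof -
  let ?admissible = "\<lambda>i. i \<le> m n \<and> a + P * acc q i n \<le> x"
  have "?admissible 0"
    using \<open>a \<le> x\<close> by simp
  then have g: "?admissible g"
    unfolding g_def greedy_digit_def by (rule GreatestI_nat) auto
  moreover have "x \<le> a + P * acc q (Suc g) n"
  proof (cases "g < m n")
    case True
    have "\<not> ?admissible (Suc g)"
      using Greatest_le_nat[of ?admissible "Suc g" "m n"] unfolding g_def greedy_digit_def by auto
    then show ?thesis
      using True by auto
  next
    case False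
    then show ?thesis
      using g Q_matrix_acc_last[OF Q \<open>n \<ge> 1\<close>] \<open>x \<le> a + P\<close> by (simp add: le_antisym)
  qed
  ultimately show ?thesis
    by blast
qed

text \<open>The left endpoint and the length of the cylinder interval selected after \<open>n\<close> greedy steps.\<close>

primrec greedy_cylinder :: "(nat \<Rightarrow> nat) \<Rightarrow> (nat \<Rightarrow> nat \<Rightarrow> real) \<Rightarrow> real \<Rightarrow> nat \<Rightarrow> real \<times> real" where
  "greedy_cylinder m q x 0 = (0, 1)"
| "greedy_cylinder m q x (Suc n) = (case greedy_cylinder m q x n of (a, P) \<Rightarrow>
     let i = greedy_digit m q x a P (Suc n) in (a + P * acc q i (Suc n), P * q i (Suc n)))"

definition greedy_digits :: "(nat \<Rightarrow> nat) \<Rightarrow> (nat \<Rightarrow> nat \<Rightarrow> real) \<Rightarrow> real \<Rightarrow> nat \<Rightarrow> nat" where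
  "greedy_digits m q x n = (case n of 0 \<Rightarrow> 0
     | Suc k \<Rightarrow> (case greedy_cylinder m q x k of (a, P) \<Rightarrow> greedy_digit m q x a P (Suc k)))"

lemma greedy_cylinder_eq:
  "greedy_cylinder m q x n =
    (partial_Delta q n (greedy_digits m q x), digit_prod q n (greedy_digits m q x))"
  by (induction n) (simp_all add: partial_Delta_Suc digit_prod_Suc greedy_digits_def Let_def)

lemma greedy_digits_Suc:
  "greedy_digits m q x (Suc k) = greedy_digit m q x
     (partial_Delta q k (greedy_digits m q x)) (digit_prod q k (greedy_digits m q x)) (Suc k)"
  by (simp add: greedy_digits_def greedy_cylinder_eq)

lemma Q_representation_greedy:
  assumes Q: "Q_matrix m q" and "0 \<le> x" "x \<le> 1"
  shows "digit_seq m (greedy_digits m q x) \<and> DeltaQ q (greedy_digits m q x) = x"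
proof -
  let ?g = "greedy_digits m q x"
  have invariant: "partial_Delta q n ?g \<le> x \<and> x \<le> partial_Delta q n ?g + digit_prod q n ?g \<and>
      (\<forall>l\<in>{1..n}. ?g l \<le> m l)" for n
  proof (induction n)
    case 0
    then show ?case using assms by simp
  next
    case (Suc n)
    then have "?g (Suc n) \<le> m (Suc n) \<and>
        partial_Delta q n ?g + digit_prod q n ?g * acc q (?g (Suc n)) (Suc n) \<le> x \<and>
        x \<le> partial_Delta q n ?g + digit_prod q n ?g * acc q (Suc (?g (Suc n))) (Suc n)"
      unfolding greedy_digits_Suc by (intro greedy_digit_bounds[OF Q]) auto
    then show ?case
      using Suc.IH by (auto simp: partial_Delta_Suc digit_prod_Suc acc_Suc algebra_simps le_Suc_eq)
  qed
  then have ds: "digit_seq m ?g"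
    unfolding digit_seq_def by (meson atLeastAtMost_iff order_refl)
  have "(\<lambda>N. partial_Delta q N ?g) \<longlonglongrightarrow> x"
  proof (rule tendsto_sandwich)
    show "\<forall>\<^sub>F N in sequentially. x - digit_prod q N ?g \<le> partial_Delta q N ?g"
      "\<forall>\<^sub>F N in sequentially. partial_Delta q N ?g \<le> x"
      using invariant by (simp_all add: algebra_simps)
    show "(\<lambda>N. x - digit_prod q N ?g) \<longlonglongrightarrow> x"
      using tendsto_diff[OF tendsto_const Q_matrix_digit_prod_LIMSEQ[OF Q ds], of x] by simp
  qed simp
  then show ?thesis
    using ds LIMSEQ_unique[OF DeltaQ_LIMSEQ[OF Q ds]] by blast
qed

lemma digit_seq_nega_digits: "digit_seq m i \<Longrightarrow> digit_seq m (nega_digits m i)"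
  unfolding digit_seq_def nega_digits_def by auto

lemma DeltaQ_nega_digits_nega_digits:
  "digit_seq m i \<Longrightarrow> DeltaQ q (nega_digits m (nega_digits m i)) = DeltaQ q i"
  unfolding DeltaQ_def digit_seq_def nega_digits_def
  by (intro arg_cong[where f=suminf] ext arg_cong2[where f="(*)"] prod.cong) auto

definition Q_digits :: "(nat \<Rightarrow> nat) \<Rightarrow> (nat \<Rightarrow> nat \<Rightarrow> real) \<Rightarrow> real \<Rightarrow> nat \<Rightarrow> nat" where
  "Q_digits m q x = nega_digits m (SOME i. digit_seq m i \<and> x = NegaDeltaQ m q i)"

lemma Q_digits_represent:
  assumes Q: "Q_matrix m q" and "0 \<le> x" "x \<le> 1"
  shows "digit_seq m (Q_digits m q x) \<and> DeltaQ q (Q_digits m q x) = x"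
proof -
  let ?g = "greedy_digits m q x"
  have "digit_seq m (nega_digits m ?g) \<and> x = NegaDeltaQ m q (nega_digits m ?g)"
    using Q_representation_greedy[OF assms] digit_seq_nega_digits DeltaQ_nega_digits_nega_digits
    unfolding NegaDeltaQ_def by metis
  then have "digit_seq m (SOME i. digit_seq m i \<and> x = NegaDeltaQ m q i) \<and>
      x = NegaDeltaQ m q (SOME i. digit_seq m i \<and> x = NegaDeltaQ m q i)"
    by (rule someI[where P="\<lambda>i. digit_seq m i \<and> x = NegaDeltaQ m q i"])
  then show ?thesis
    unfolding Q_digits_def NegaDeltaQ_def using digit_seq_nega_digits by metis
qed

lemma Ffun_eq_series:
  "Ffun m q p x = (\<Sum>k. acc p (Q_digits m q x (k+1)) (k+1) * (\<Prod>l\<in>{1..k}. p (Q_digits m q x l) l))"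
  unfolding Ffun_def Fdigits_def Q_digits_def tilde_def nega_digits_def
  by (intro arg_cong[where f=suminf] ext arg_cong2[where f="(*)"] prod.cong) (auto split: if_splits)

lemma partial_F_LIMSEQ:
  assumes "Q_matrix m q" "P_matrix m p" and "0 \<le> x" "x \<le> 1"
  shows "(\<lambda>N. partial_Delta p N (Q_digits m q x)) \<longlonglongrightarrow> Ffun m q p x"
  using Q_digits_represent[OF assms(1,3,4)] unfolding Ffun_eq_series
  by (intro partial_Delta_LIMSEQ[OF P_matrix_acc_in_unit[OF assms(2)] _
        P_matrix_digit_prod_LIMSEQ[OF assms(2)]]) auto

lemma partial_F_in_unit:
  assumes "Q_matrix m q" "P_matrix m p" and "0 \<le> x" "x \<le> 1"
  shows "0 \<le> partial_Delta p N (Q_digits m q x) \<and> partial_Delta p N (Q_digits m q x) \<le> 1"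
  using Q_digits_represent[OF assms(1,3,4)] unfolding digit_seq_def
  by (intro partial_Delta_in_unit[OF P_matrix_acc_in_unit[OF assms(2)]]) auto

subsection \<open>Cylinder sets\<close>

lemma lmeasurable_between_intervals:
  fixes a b :: real
  assumes "a \<le> b" and "{a<..<b} \<subseteq> E" and "E \<subseteq> {a..b}"
  shows "E \<in> lmeasurable \<and> measure lebesgue E = b - a"
proof -
  have E: "E \<in> lmeasurable"
    by (rule completion.complete_sets_sandwich_fmeasurable[where A="{a<..<b}" and B=E and C="{a..b}"])
      (use assms in auto)
  have "measure lebesgue {a<..<b} \<le> measure lebesgue E"
    by (rule measure_mono_fmeasurable) (use E assms in auto)
  moreover have "measure lebesgue E \<le> measure lebesgue {a..b}"
    by (rule measure_mono_fmeasurable) (use E assms in auto)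
  ultimately show ?thesis
    using E \<open>a \<le> b\<close> by simp
qed

definition digit_prefixes :: "(nat \<Rightarrow> nat) \<Rightarrow> nat \<Rightarrow> (nat \<Rightarrow> nat) set" where
  "digit_prefixes m N = PiE {1..N} (\<lambda>l. {..m l})"

definition cylinder :: "(nat \<Rightarrow> nat) \<Rightarrow> (nat \<Rightarrow> nat \<Rightarrow> real) \<Rightarrow> nat \<Rightarrow> (nat \<Rightarrow> nat) \<Rightarrow> real set" where
  "cylinder m q N c = {x \<in> {0..1}. \<forall>l\<in>{1..N}. Q_digits m q x l = c l}"

lemma finite_digit_prefixes: "finite (digit_prefixes m N)"
  unfolding digit_prefixes_def by (intro finite_PiE) auto

lemma cylinder_measure:
  assumes Q: "Q_matrix m q" and c: "c \<in> digit_prefixes m N"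
  shows "cylinder m q N c \<in> lmeasurable \<and> measure lebesgue (cylinder m q N c) = digit_prod q N c"
proof -
  have c_digits: "\<forall>l\<in>{1..N}. c l \<le> m l"
    using c unfolding digit_prefixes_def by auto
  define a where "a = partial_Delta q N c"
  define b where "b = partial_Delta q N c + digit_prod q N c"
  have ab: "0 \<le> a" "a \<le> b" "b \<le> 1"
    using cylinder_interval_mono[OF Q _ c_digits, of 0] Q_matrix_digit_prod_nonneg[OF Q c_digits]
    unfolding a_def b_def by auto
  have x_digits: "\<forall>l\<in>{1..N}. Q_digits m q x l \<le> m l" if "0 \<le> x" "x \<le> 1" for x
    using Q_digits_represent[OF Q that] unfolding digit_seq_def by auto
  have x_interval: "partial_Delta q N (Q_digits m q x) \<le> x \<and>
      x \<le> partial_Delta q N (Q_digits m q x) + digit_prod q N (Q_digits m q x)"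
    if "0 \<le> x" "x \<le> 1" for x
    using Q_digits_represent[OF Q that] DeltaQ_in_cylinder_interval[OF Q, of "Q_digits m q x" N] by simp
  have "{a<..<b} \<subseteq> cylinder m q N c"
  proof
    fix x
    assume x: "x \<in> {a<..<b}"
    then have "0 \<le> x" "x \<le> 1"
      using ab by auto
    then have "\<not> (\<exists>l\<in>{1..N}. Q_digits m q x l \<noteq> c l)"
      using cylinder_intervals_disjoint[OF Q x_digits c_digits] x_interval x
      unfolding a_def b_def by force
    then show "x \<in> cylinder m q N c"
      unfolding cylinder_def using \<open>0 \<le> x\<close> \<open>x \<le> 1\<close> by auto
  qed
  moreover have "cylinder m q N c \<subseteq> {a..b}"
  proof
    fix x
    assume "x \<in> cylinder m q N c"
    then have "0 \<le> x" "x \<le> 1" and same: "\<And>l. l \<in> {1..N} \<Longrightarrow> Q_digits m q x l = c l"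
      unfolding cylinder_def by auto
    then show "x \<in> {a..b}"
      using x_interval[OF \<open>0 \<le> x\<close> \<open>x \<le> 1\<close>]
        partial_Delta_cong[of N _ c q, OF same] digit_prod_cong[of N _ c q, OF same]
      unfolding a_def b_def by auto
  qed
  ultimately show ?thesis
    using lmeasurable_between_intervals[OF \<open>a \<le> b\<close>] unfolding a_def b_def by auto
qed

lemma indicator_mult_eq_sum_cylinders:
  fixes g :: "(nat \<Rightarrow> nat) \<Rightarrow> real"
  assumes Q: "Q_matrix m q" and g: "\<And>c c'. (\<And>l. l \<in> {1..N} \<Longrightarrow> c l = c' l) \<Longrightarrow> g c = g c'"
  shows "indicator {0..1} x * g (Q_digits m q x) =
    (\<Sum>c\<in>digit_prefixes m N. g c * indicator (cylinder m q N c) x)"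
proof (cases "x \<in> {0..1}")
  case False
  then have "x \<notin> cylinder m q N c" for c
    unfolding cylinder_def by auto
  with False show ?thesis
    by simp
next
  case True
  define c\<^sub>x where "c\<^sub>x = restrict (Q_digits m q x) {1..N}"
  have "c\<^sub>x \<in> digit_prefixes m N"
    using Q_digits_represent[OF Q] True unfolding digit_prefixes_def c\<^sub>x_def digit_seq_def by auto
  moreover have "x \<in> cylinder m q N c \<longleftrightarrow> c = c\<^sub>x" if "c \<in> digit_prefixes m N" for c
    using that True unfolding cylinder_def digit_prefixes_def c\<^sub>x_def
    by (auto simp: fun_eq_iff PiE_def extensional_def)
  moreover have "g c\<^sub>x = g (Q_digits m q x)"
    by (rule g) (simp add: c\<^sub>x_def)
  ultimately show ?thesis
    using True by (simp add: indicator_def if_distrib sum.delta' finite_digit_prefixes cong: sum.cong)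
qed

lemma integral_digit_prefix_function:
  fixes g :: "(nat \<Rightarrow> nat) \<Rightarrow> real"
  assumes Q: "Q_matrix m q" and g: "\<And>c c'. (\<And>l. l \<in> {1..N} \<Longrightarrow> c l = c' l) \<Longrightarrow> g c = g c'"
  shows "integrable lebesgue (\<lambda>x. indicator {0..1} x * g (Q_digits m q x)) \<and>
    integral\<^sup>L lebesgue (\<lambda>x. indicator {0..1} x * g (Q_digits m q x)) =
      (\<Sum>c\<in>digit_prefixes m N. g c * digit_prod q N c)"
proof -
  have cyl: "integrable lebesgue (indicator (cylinder m q N c) :: real \<Rightarrow> real)"
    "integral\<^sup>L lebesgue (indicator (cylinder m q N c) :: real \<Rightarrow> real) = digit_prod q N c"
    if "c \<in> digit_prefixes m N" for c
    using cylinder_measure[OF Q that] by (auto simp: fmeasurable_def)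
  have "(\<lambda>x. indicator {0..1} x * g (Q_digits m q x)) =
      (\<lambda>x. \<Sum>c\<in>digit_prefixes m N. g c * indicator (cylinder m q N c) x)"
    by (intro ext indicator_mult_eq_sum_cylinders[OF Q g])
  then show ?thesis
    using cyl by (auto intro!: Bochner_Integration.integrable_sum sum.cong
        simp: Bochner_Integration.integral_sum)
qed

text \<open>Each summand of \<open>partial_Delta p N c * digit_prod q N c\<close> is a product over the positions
  \<open>1, \<dots>, N\<close> of factors depending on one digit each, so its sum over all prefixes factorises.\<close>

lemma sum_digit_prefixes_partial_Delta:
  assumes q_rows: "\<forall>n\<ge>1. (\<Sum>i\<le>m n. q i n) = 1"
  shows "(\<Sum>c\<in>digit_prefixes m N. partial_Delta p N c * digit_prod q N c) =
    (\<Sum>k<N. (\<Sum>i\<le>m (Suc k). acc p i (Suc k) * q i (Suc k)) * (\<Prod>l\<in>{1..k}. \<Sum>i\<le>m l. p i l * q i l))"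
proof -
  define h where "h k l i =
    (if l \<le> k then p i l * q i l else if l = Suc k then acc p i l * q i l else q i l)" for k l i
  have summand: "acc p (c (Suc k)) (Suc k) * digit_prod p k c * digit_prod q N c =
      (\<Prod>l\<in>{1..N}. h k l (c l))" if "Suc k \<le> N" for k c
    using that
  proof (induction N rule: dec_induct)
    case base
    have "(\<Prod>l\<in>{1..k}. h k l (c l)) = digit_prod p k c * digit_prod q k c"
      unfolding digit_prod_def prod.distrib[symmetric] by (rule prod.cong) (auto simp: h_def)
    then show ?case
      by (simp add: prod.nat_ivl_Suc' digit_prod_Suc h_def)
  qed (simp add: prod.nat_ivl_Suc' digit_prod_Suc h_def)
  have factor: "(\<Prod>l\<in>{1..N}. \<Sum>i\<le>m l. h k l i) =
      (\<Sum>i\<le>m (Suc k). acc p i (Suc k) * q i (Suc k)) * (\<Prod>l\<in>{1..k}. \<Sum>i\<le>m l. p i l * q i l)"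
    if "Suc k \<le> N" for k
    using that
  proof (induction N rule: dec_induct)
    case base
    have "(\<Prod>l\<in>{1..k}. \<Sum>i\<le>m l. h k l i) = (\<Prod>l\<in>{1..k}. \<Sum>i\<le>m l. p i l * q i l)"
      by (intro prod.cong sum.cong) (auto simp: h_def)
    then show ?case
      by (simp add: prod.nat_ivl_Suc' h_def mult.commute)
  next
    case (step N)
    then show ?case
      using q_rows by (simp add: prod.nat_ivl_Suc' h_def)
  qed
  have "(\<Sum>c\<in>digit_prefixes m N. partial_Delta p N c * digit_prod q N c) =
      (\<Sum>c\<in>digit_prefixes m N. \<Sum>k<N. \<Prod>l\<in>{1..N}. h k l (c l))"
    unfolding partial_Delta_def digit_prod_def[symmetric] sum_distrib_right
    by (intro sum.cong refl) (simp add: summand Suc_leI)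
  also have "\<dots> = (\<Sum>k<N. \<Prod>l\<in>{1..N}. \<Sum>i\<le>m l. h k l i)"
    unfolding digit_prefixes_def by (subst sum.swap) (simp add: prod_sum_PiE)
  also have "\<dots> = (\<Sum>k<N. (\<Sum>i\<le>m (Suc k). acc p i (Suc k) * q i (Suc k)) *
      (\<Prod>l\<in>{1..k}. \<Sum>i\<le>m l. p i l * q i l))"
    by (intro sum.cong refl factor) simp
  finally show ?thesis .
qed

lemma integral_partial_F:
  assumes Q: "Q_matrix m q"
  shows "integrable lebesgue (\<lambda>x. indicator {0..1} x * partial_Delta p N (Q_digits m q x)) \<and>
    integral\<^sup>L lebesgue (\<lambda>x. indicator {0..1} x * partial_Delta p N (Q_digits m q x)) =
    (\<Sum>k<N. (\<Sum>i\<le>m (Suc k). acc p i (Suc k) * q i (Suc k)) * (\<Prod>l\<in>{1..k}. \<Sum>i\<le>m l. p i l * q i l))"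
proof -
  have rows: "\<forall>n\<ge>1. (\<Sum>i\<le>m n. q i n) = 1"
    using Q unfolding Q_matrix_def by blast
  show ?thesis
    using integral_digit_prefix_function[where g="partial_Delta p N" and N=N, OF Q partial_Delta_cong]
    unfolding sum_digit_prefixes_partial_Delta[OF rows] .
qed

theorem mainTheorem7:
  fixes m :: "nat \<Rightarrow> nat" and q p :: "nat \<Rightarrow> nat \<Rightarrow> real"
  assumes "Q_matrix m q" and "P_matrix m p"
  defines "z \<equiv> (\<lambda>n. \<Sum>i\<le>m n. acc p i n * q i n)"
      and "\<sigma> \<equiv> (\<lambda>n. \<Sum>i\<le>m n. p i n * q i n)"
  shows "set_integrable lebesgue {0..1::real} (Ffun m q p) \<and>
         (\<lambda>n. z (n+2) * (\<Prod>k\<in>{1..n+1}. \<sigma> k)) sums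
           ((LINT x:{0..1::real}|lebesgue. Ffun m q p x) - z 1)"
proof -
  note Q = assms(1) and P = assms(2)
  define s where "s N x = indicator {0..1::real} x * partial_Delta p N (Q_digits m q x)" for N x
  define f where "f x = indicator {0..1::real} x * Ffun m q p x" for x
  have s_integral: "integrable lebesgue (s N) \<and>
      integral\<^sup>L lebesgue (s N) = (\<Sum>k<N. z (Suc k) * (\<Prod>l\<in>{1..k}. \<sigma> l))" for N
    using integral_partial_F[OF Q] unfolding s_def z_def \<sigma>_def .
  have s_LIMSEQ: "(\<lambda>N. s N x) \<longlonglongrightarrow> f x" for x
    using partial_F_LIMSEQ[OF Q P, of x] unfolding s_def f_def by (cases "x \<in> {0..1}") auto
  have s_bound: "AE x in lebesgue. norm (s N x) \<le> indicator {0..1} x" for N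
    using partial_F_in_unit[OF Q P] unfolding s_def by (intro AE_I2) (simp add: indicator_def)
  have s_measurable: "s N \<in> borel_measurable lebesgue" for N
    using s_integral by (blast intro: borel_measurable_integrable)
  have f_measurable: "f \<in> borel_measurable lebesgue"
    by (rule borel_measurable_LIMSEQ_real[OF s_LIMSEQ s_measurable])
  have indicator_integrable: "integrable lebesgue (indicator {0..1::real} :: real \<Rightarrow> real)"
    by simp
  have "integrable lebesgue f" "(\<lambda>N. integral\<^sup>L lebesgue (s N)) \<longlonglongrightarrow> integral\<^sup>L lebesgue f"
    using integrable_dominated_convergence[where s=s, OF f_measurable s_measurable
        indicator_integrable AE_I2[OF s_LIMSEQ] s_bound]
      integral_dominated_convergence[where s=s, OF f_measurable s_measurable
        indicator_integrable AE_I2[OF s_LIMSEQ] s_bound] .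
  then have "set_integrable lebesgue {0..1::real} (Ffun m q p)"
    and "(\<lambda>k. z (Suc k) * (\<Prod>l\<in>{1..k}. \<sigma> l)) sums (LINT x:{0..1::real}|lebesgue. Ffun m q p x)"
    using s_integral unfolding set_integrable_def set_lebesgue_integral_def f_def sums_def by simp_all
  moreover note sums_Suc_iff[of "\<lambda>k. z (Suc k) * (\<Prod>l\<in>{1..k}. \<sigma> l)"]
  ultimately show ?thesis
    by simp
qed

end
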